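(* Let $K$ and $K'$ be oriented virtual knot diagrams that are related by a finite sequence of generalized Reidemeister moves. Then $F_K(t,s)=F_{K'}(t,s)$. That is, $F_K(t,s)$ is an invariant of oriented virtual knots.
   Context: Virtual knot diagrams have real and virtual crossings. Generalized Reidemeister moves are the three classical Reidemeister moves, the three purely virtual Reidemeister moves, and the mixed (semi-virtual) third move. The Gauss diagram $G(K)$ of an oriented virtual knot diagram $K$ is built as follows. Take a counterclockwise-oriented circle (the parametrizing circle of the knot). For each real crossing, mark its two preimages and join them by a chord directed from the overcrossing preimage to the undercrossing preimage. Label the chord with the writhe (sign) $w(c)=\pm1$ of the crossing. Real crossings and chords are identified, and $w(K)=\sum_c w(c)$. Two chords intersect if their endpoints interleave on the circle. Let $d$ be a chord intersecting a chord $c$. We say $d$ crosses $c$ from left to right if, viewing $c$ along its direction, the tail of $d$ lies on the left of $c$ and its head on the right. Crossing from right to left is defined in the opposite way. Let $r_1,\dots,r_n$ be the chords crossing $c$ from left to right and $l_1,\dots,l_m$ those crossing $c$ from right to left. The index of $c$ is $\mathrm{Ind}(c)=\sum_i w(r_i)-\sum_j w(l_j)$. Put $N=|\mathrm{Ind}(c)|$. If $N\ge1$, let $\phi:\mathbb{Z}\to\{0,\dots,N-1\}$ be reduction mod $N$; if $N=0$, let $\phi$ be the identity of $\mathbb{Z}$. The index function of $c$ is $$g_c(s)=\sum_i w(r_i)s^{\phi(\mathrm{Ind}(r_i))}-\sum_j w(l_j)s^{\phi(-\mathrm{Ind}(l_j))}\in\mathbb{Z}[s,s^{-1}].$$ It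 satisfies $g_c(1)=\mathrm{Ind}(c)$. Call Laurent polynomials $p,q\in\mathbb{Z}[s,s^{-1}]$ equivalent if $p(1)=q(1)$ and $p\equiv q \pmod{s^{|p(1)|}-1}$. For $p(1)=0$ this means $p=q$. Write $t^{[p]}$ for the basis element of the free abelian group on equivalence classes. Define $$F_K(t,s)=\sum_{c} w(c)\,t^{[g_c(s)]}-w(K)\,t^{[0]},$$ where the sum runs over all real crossings $c$ of $K$. *)

theory Defs
  imports Main "HOL-Library.Poly_Mapping" "HOL-Library.Multiset"
begin

text \<open>A Gauss diagram is encoded as the cyclic sequence (a list, read in the
counterclockwise direction of the parametrizing circle, starting at an arbitrary
base point) of chord endpoints.  An endpoint is a triple (c, ov, e): c is the
label of the chord (= real crossing), ov is True for the overcrossing preimage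
(the tail of the chord) and False for the undercrossing preimage (the head), and
e is the writhe of the crossing.\<close>

type_synonym gpt = "nat \<times> bool \<times> int"
type_synonym gauss = "gpt list"

definition labels :: "gauss \<Rightarrow> nat set" where
  "labels G = fst ` set G"

definition gauss_wf :: "gauss \<Rightarrow> bool" where
  "gauss_wf G \<longleftrightarrow>
     (\<forall>c\<in>labels G. length (filter (\<lambda>p. fst p = c) G) = 2 \<and>
        (\<exists>e\<in>{1, -1}. (c, True, e) \<in> set G \<and> (c, False, e) \<in> set G))"

definition tailpos :: "gauss \<Rightarrow> nat \<Rightarrow> nat" where
  "tailpos G c = (THE i. i < length G \<and> fst (G ! i) = c \<and> fst (snd (G ! i)))"

definition headpos :: "gauss \<Rightarrow> nat \<Rightarrow> nat" where
  "headpos G c = (THE i. i < length G \<and> fst (G ! i) = c \<and> \<not> fst (snd (G ! i)))"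

definition wsign :: "gauss \<Rightarrow> nat \<Rightarrow> int" where
  "wsign G c = snd (snd (G ! tailpos G c))"

definition writhe :: "gauss \<Rightarrow> int" where
  "writhe G = (\<Sum>c\<in>labels G. wsign G c)"

text \<open>Position i lies on the right of chord c (viewed along its direction) iff it
lies on the open counterclockwise arc from the tail of c to the head of c.\<close>
definition on_right :: "gauss \<Rightarrow> nat \<Rightarrow> nat \<Rightarrow> bool" where
  "on_right G c i \<longleftrightarrow>
     (let a = tailpos G c; b = headpos G c in
        if a < b then a < i \<and> i < b else a < i \<or> i < b)"

definition on_left :: "gauss \<Rightarrow> nat \<Rightarrow> nat \<Rightarrow> bool" where
  "on_left G c i \<longleftrightarrow> i \<noteq> tailpos G c \<and> i \<noteq> headpos G c \<and> \<not> on_right G c i"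

definition crossesLR :: "gauss \<Rightarrow> nat \<Rightarrow> nat \<Rightarrow> bool" where
  "crossesLR G d c \<longleftrightarrow> on_left G c (tailpos G d) \<and> on_right G c (headpos G d)"

definition crossesRL :: "gauss \<Rightarrow> nat \<Rightarrow> nat \<Rightarrow> bool" where
  "crossesRL G d c \<longleftrightarrow> on_right G c (tailpos G d) \<and> on_left G c (headpos G d)"

definition ind :: "gauss \<Rightarrow> nat \<Rightarrow> int" where
  "ind G c = (\<Sum>d\<in>{d\<in>labels G. crossesLR G d c}. wsign G d)
            - (\<Sum>d\<in>{d\<in>labels G. crossesRL G d c}. wsign G d)"

definition phi :: "nat \<Rightarrow> int \<Rightarrow> int" where
  "phi N k = (if N = 0 then k else k mod int N)"

text \<open>Z[s,s^-1] is the group ring of Z: finitely supported maps from exponents to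
coefficients, with convolution product.  The monomial a s^k is single k a.\<close>
type_synonym laurent = "int \<Rightarrow>\<^sub>0 int"

definition ev1 :: "laurent \<Rightarrow> int" where
  "ev1 p = (\<Sum>k\<in>Poly_Mapping.keys p. Poly_Mapping.lookup p k)"

definition lequiv :: "laurent \<Rightarrow> laurent \<Rightarrow> bool" where
  "lequiv p q \<longleftrightarrow> ev1 p = ev1 q \<and>
     (\<exists>h::laurent. p - q = (Poly_Mapping.single (int (nat \<bar>ev1 p\<bar>)) 1 - Poly_Mapping.single 0 1) * h)"

definition lclass :: "laurent \<Rightarrow> laurent set" where
  "lclass p = {q. lequiv p q}"

definition gfun :: "gauss \<Rightarrow> nat \<Rightarrow> laurent" where
  "gfun G c = (let N = nat \<bar>ind G c\<bar> in
      (\<Sum>d\<in>{d\<in>labels G. crossesLR G d c}. Poly_Mapping.single (phi N (ind G d)) (wsign G d))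
    - (\<Sum>d\<in>{d\<in>labels G. crossesRL G d c}. Poly_Mapping.single (phi N (- ind G d)) (wsign G d)))"

text \<open>F_K(t,s), an element of the free abelian group on the equivalence classes,
given by its coefficient function: the coefficient of t^[X] for the class X.\<close>
definition FK :: "gauss \<Rightarrow> laurent set \<Rightarrow> int" where
  "FK G X = (\<Sum>c\<in>{c\<in>labels G. lclass (gfun G c) = X}. wsign G c)
            - (if lclass 0 = X then writhe G else 0)"

text \<open>Purely virtual moves and the mixed move do not change the Gauss diagram.
Changing the base point (rotation) and renaming chords do not change the diagram
either.\<close>

definition r3_pairs :: "nat \<Rightarrow> nat \<Rightarrow> nat \<Rightarrow> int \<Rightarrow> int \<Rightarrow> int \<Rightarrow> bool \<Rightarrow> bool \<Rightarrow> bool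
    \<Rightarrow> gauss \<times> gauss \<times> gauss" where
  "r3_pairs x y z ex ey ez oT oM oB =
     ((if oT then [(x, True, ex), (y, True, ey)] else [(y, True, ey), (x, True, ex)]),
      (if oM then [(x, False, ex), (z, True, ez)] else [(z, True, ez), (x, False, ex)]),
      (if oB then [(y, False, ey), (z, False, ez)] else [(z, False, ez), (y, False, ey)]))"

text \<open>Strands: top T (over at x and y), middle M (under at x, over at z), bottom B
(under at y and z).  oT: x before y on T; oM: x before z on M; oB: y before z on B.
A configuration is realizable by an actual triangle of three oriented strands
iff the following sign condition holds.\<close>
definition bsgn :: "bool \<Rightarrow> int" where
  "bsgn b = (if b then 1 else -1)"

definition r3_ok :: "int \<Rightarrow> int \<Rightarrow> int \<Rightarrow> bool \<Rightarrow> bool \<Rightarrow> bool \<Rightarrow> bool" where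
  "r3_ok ex ey ez oT oM oB \<longleftrightarrow>
     ex \<in> {1, -1} \<and> ey \<in> {1, -1} \<and> ez \<in> {1, -1} \<and>
     ey * ez = bsgn oT * bsgn oM \<and> ex * ey = bsgn oM * bsgn oB"

inductive gauss_move :: "gauss \<Rightarrow> gauss \<Rightarrow> bool" where
  rotate: "gauss_move G (rotate n G)"
| relabel: "inj_on (f :: nat \<Rightarrow> nat) (labels G) \<Longrightarrow> gauss_move G (map (\<lambda>(c, ov, e). (f c, ov, e)) G)"
| omega1: "c \<notin> labels (xs @ ys) \<Longrightarrow> e \<in> {1, -1} \<Longrightarrow>
     gauss_move (xs @ ys) (xs @ [(c, ov, e), (c, \<not> ov, e)] @ ys)"
| omega2: "a \<notin> labels (xs @ ys @ zs) \<Longrightarrow> b \<notin> labels (xs @ ys @ zs) \<Longrightarrow> a \<noteq> b \<Longrightarrow>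
     e \<in> {1, -1} \<Longrightarrow>
     Q \<in> {[(a, False, e), (b, False, -e)], [(b, False, -e), (a, False, e)]} \<Longrightarrow>
     P = [(a, True, e), (b, True, -e)] \<Longrightarrow>
     gauss_move (xs @ ys @ zs) (xs @ P @ ys @ Q @ zs)"
| omega2': "a \<notin> labels (xs @ ys @ zs) \<Longrightarrow> b \<notin> labels (xs @ ys @ zs) \<Longrightarrow> a \<noteq> b \<Longrightarrow>
     e \<in> {1, -1} \<Longrightarrow>
     Q \<in> {[(a, False, e), (b, False, -e)], [(b, False, -e), (a, False, e)]} \<Longrightarrow>
     P = [(a, True, e), (b, True, -e)] \<Longrightarrow>
     gauss_move (xs @ ys @ zs) (xs @ Q @ ys @ P @ zs)"
| omega3: "gauss_wf (xs @ P1 @ ys @ P2 @ zs @ P3 @ ws) \<Longrightarrow>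
     distinct [x, y, z] \<Longrightarrow> r3_ok ex ey ez oT oM oB \<Longrightarrow>
     r3_pairs x y z ex ey ez oT oM oB = (PT, PM, PB) \<Longrightarrow>
     mset [P1, P2, P3] = mset [PT, PM, PB :: gauss] \<Longrightarrow>
     gauss_move (xs @ P1 @ ys @ P2 @ zs @ P3 @ ws)
                (xs @ rev P1 @ ys @ rev P2 @ zs @ rev P3 @ ws)"

definition gauss_equiv :: "gauss \<Rightarrow> gauss \<Rightarrow> bool" where
  "gauss_equiv = (symclp (\<lambda>G G'. gauss_wf G \<and> gauss_wf G' \<and> gauss_move G G'))\<^sup>*\<^sup>*"

end

theory Submission
  imports Defs
begin

text \<open>Write \<open>crossing G d c \<in> {-1, 0, 1}\<close> for the sign with which the chord \<open>d\<close> crosses the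
  chord \<open>c\<close>. Then \<open>Ind(c)\<close> and \<open>g\<^sub>c\<close> are sums over all chords \<open>d\<close> of terms determined by
  \<open>w(d)\<close>, \<open>crossing G d c\<close> and \<open>Ind(d)\<close>, so \<open>F\<^sub>K\<close> only depends on the writhes and the crossing
  signs. Rotating the diagram, renaming chords and inserting new endpoints keep the crossing
  signs of the old chords. The new chord of an \<open>\<Omega>1\<close> move crosses nothing, so its index function
  is \<open>0\<close> and its term cancels against its writhe; the two new chords of an \<open>\<Omega>2\<close> move cross all
  other chords alike and have opposite writhes, so their terms cancel. An \<open>\<Omega>3\<close> move exchanges
  the endpoints in three blocks of two adjacent positions. This only changes crossing signs
  among its three chords \<open>x\<close>, \<open>y\<close>, \<open>z\<close>, and every other chord \<open>d\<close> satisfies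
  \<open>crossing G d y = crossing G d x + crossing G d z\<close>, whence \<open>Ind(y) = Ind(x) + Ind(z)\<close>. With
  this relation a finite check over the configurations of the triangle shows that no index and
  no index function changes.\<close>

section \<open>Chord endpoints\<close>

lemma finite_labels [simp]: "finite (labels G)"
  by (simp add: labels_def)

lemma labels_Nil [simp]: "labels [] = {}"
  and labels_Cons [simp]: "labels (p # G) = insert (fst p) (labels G)"
  and labels_append [simp]: "labels (G @ H) = labels G \<union> labels H"
  and labels_rotate [simp]: "labels (rotate n G) = labels G"
  by (auto simp: labels_def)

lemma gauss_wf_rotate [simp]: "gauss_wf (rotate n G) \<longleftrightarrow> gauss_wf G"
proof -
  have "length (filter P (rotate n G)) = length (filter P G)" for P
    unfolding rotate_drop_take
    by (metis append_take_drop_id filter_append length_append add.commute)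
  then show ?thesis
    by (simp add: gauss_wf_def)
qed

lemma gauss_wf_nth_eqI:
  assumes wf: "gauss_wf G" and i: "i < length G" and j: "j < length G"
    and "fst (G ! i) = fst (G ! j)" and "fst (snd (G ! i)) = fst (snd (G ! j))"
  shows "i = j"
proof -
  define c where "c = fst (G ! i)"
  have c: "c \<in> labels G"
    using i by (auto simp: labels_def c_def)
  obtain e where "(c, True, e) \<in> set G" "(c, False, e) \<in> set G"
    using wf c by (auto simp: gauss_wf_def)
  then obtain i0 i1 where i0: "i0 < length G" "G ! i0 = (c, True, e)"
    and i1: "i1 < length G" "G ! i1 = (c, False, e)"
    by (metis in_set_conv_nth)
  define S where "S = {i. i < length G \<and> fst (G ! i) = c}"
  have "card S = 2"
    using wf c by (simp add: gauss_wf_def length_filter_conv_card S_def)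
  moreover have "{i0, i1} \<subseteq> S" "i0 \<noteq> i1"
    using i0 i1 by (auto simp: S_def)
  ultimately have "S = {i0, i1}"
    by (metis card_2_iff card_subset_eq finite_insert finite.emptyI)
  moreover have "i \<in> S" "j \<in> S"
    using assms by (auto simp: S_def c_def)
  ultimately show ?thesis
    using i0 i1 assms(5) by auto
qed

lemma tailpos_eqI:
  assumes "gauss_wf G" "i < length G" "G ! i = (c, True, e)"
  shows "tailpos G c = i"
  unfolding tailpos_def
proof (rule the_equality)
  fix j assume "j < length G \<and> fst (G ! j) = c \<and> fst (snd (G ! j))"
  then show "j = i"
    using assms by (auto intro: gauss_wf_nth_eqI[of G, OF assms(1)])
qed (use assms in auto)

lemma headpos_eqI:
  assumes "gauss_wf G" "i < length G" "G ! i = (c, False, e)"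
  shows "headpos G c = i"
  unfolding headpos_def
proof (rule the_equality)
  fix j assume "j < length G \<and> fst (G ! j) = c \<and> \<not> fst (snd (G ! j))"
  then show "j = i"
    using assms by (auto intro: gauss_wf_nth_eqI[of G, OF assms(1)])
qed (use assms in auto)

lemma chord_endpoints:
  assumes wf: "gauss_wf G" and c: "c \<in> labels G"
  shows "tailpos G c < length G" "G ! tailpos G c = (c, True, wsign G c)"
    and "headpos G c < length G" "G ! headpos G c = (c, False, wsign G c)"
proof -
  obtain e where "(c, True, e) \<in> set G" "(c, False, e) \<in> set G"
    using wf c by (auto simp: gauss_wf_def)
  then obtain i0 i1 where i0: "i0 < length G" "G ! i0 = (c, True, e)"
    and i1: "i1 < length G" "G ! i1 = (c, False, e)"
    by (metis in_set_conv_nth)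
  have "tailpos G c = i0" "headpos G c = i1" "wsign G c = e"
    using tailpos_eqI[OF wf i0] headpos_eqI[OF wf i1] i0 by (simp_all add: wsign_def)
  then show "tailpos G c < length G" "G ! tailpos G c = (c, True, wsign G c)"
    "headpos G c < length G" "G ! headpos G c = (c, False, wsign G c)"
    using i0 i1 by auto
qed

lemma chord_endpoints_distinct:
  assumes "gauss_wf G" "c \<in> labels G" "d \<in> labels G" "c \<noteq> d"
  shows "distinct [tailpos G d, headpos G d, tailpos G c, headpos G c]"
proof -
  have "distinct (map ((!) G) [tailpos G d, headpos G d, tailpos G c, headpos G c])"
    using chord_endpoints[OF assms(1,2)] chord_endpoints[OF assms(1,3)] assms(4) by simp
  then show ?thesis
    by (simp only: distinct_map)
qed

definition pos_embedding :: "(nat \<Rightarrow> nat) \<Rightarrow> gauss \<Rightarrow> gauss \<Rightarrow> bool" where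
  "pos_embedding s G G' \<longleftrightarrow> (\<forall>i < length G. s i < length G' \<and> G' ! s i = G ! i)"

lemma chord_endpoints_transfer:
  assumes wf: "gauss_wf G" "gauss_wf G'" and s: "pos_embedding s G G'" and c: "c \<in> labels G"
  shows "tailpos G' c = s (tailpos G c)" "headpos G' c = s (headpos G c)"
    and "wsign G' c = wsign G c"
proof -
  note p = chord_endpoints[OF wf(1) c]
  have t1: "s (tailpos G c) < length G'" "G' ! s (tailpos G c) = (c, True, wsign G c)"
    using s p(1,2) by (auto simp: pos_embedding_def)
  have h1: "s (headpos G c) < length G'" "G' ! s (headpos G c) = (c, False, wsign G c)"
    using s p(3,4) by (auto simp: pos_embedding_def)
  have t: "tailpos G' c = s (tailpos G c)"
    by (rule tailpos_eqI[OF wf(2) t1])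
  show "headpos G' c = s (headpos G c)"
    by (rule headpos_eqI[OF wf(2) h1])
  show "tailpos G' c = s (tailpos G c)" "wsign G' c = wsign G c"
    using t t1 by (simp_all add: wsign_def)
qed

section \<open>Signed crossings\<close>

definition in_arc :: "nat \<Rightarrow> nat \<Rightarrow> nat \<Rightarrow> bool" where
  "in_arc p a q \<longleftrightarrow> (if p < q then p < a \<and> a < q else p < a \<or> a < q)"

definition cross_sign :: "nat \<Rightarrow> nat \<Rightarrow> nat \<Rightarrow> nat \<Rightarrow> int" where
  "cross_sign a b p q =
     (if a \<notin> {p, q} \<and> \<not> in_arc p a q \<and> in_arc p b q then 1
      else if in_arc p a q \<and> b \<notin> {p, q} \<and> \<not> in_arc p b q then -1 else 0)"

definition crossing :: "gauss \<Rightarrow> nat \<Rightarrow> nat \<Rightarrow> int" where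
  "crossing G d c = cross_sign (tailpos G d) (headpos G d) (tailpos G c) (headpos G c)"

lemma on_right_eq_in_arc: "on_right G c i \<longleftrightarrow> in_arc (tailpos G c) i (headpos G c)"
  by (simp add: on_right_def in_arc_def Let_def)

lemma crossing_eq:
  "crossing G d c = (if crossesLR G d c then 1 else if crossesRL G d c then -1 else 0)"
  by (simp add: crossing_def cross_sign_def crossesLR_def crossesRL_def on_left_def
      on_right_eq_in_arc)

lemma not_crossesLR_and_RL: "crossesLR G d c \<Longrightarrow> \<not> crossesRL G d c"
  by (simp add: crossesLR_def crossesRL_def on_left_def)

lemma ind_eq_sum_crossing: "ind G c = (\<Sum>d\<in>labels G. wsign G d * crossing G d c)"
proof -
  have "(\<Sum>d\<in>labels G. wsign G d * crossing G d c) =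
      (\<Sum>d\<in>labels G. if crossesLR G d c then wsign G d else 0)
    - (\<Sum>d\<in>labels G. if crossesRL G d c then wsign G d else 0)"
    unfolding sum_subtractf[symmetric]
    by (rule sum.cong) (auto simp: crossing_eq dest: not_crossesLR_and_RL)
  then show ?thesis
    by (simp add: ind_def sum.inter_filter)
qed

lemma gfun_eq_sum_crossing: "gfun G c = (\<Sum>d\<in>labels G.
    Poly_Mapping.single (phi (nat \<bar>ind G c\<bar>) (crossing G d c * ind G d)) (crossing G d c * wsign G d))"
proof -
  have "(\<Sum>d\<in>labels G. Poly_Mapping.single (phi N (crossing G d c * ind G d)) (crossing G d c * wsign G d)) =
      (\<Sum>d\<in>labels G. if crossesLR G d c then Poly_Mapping.single (phi N (ind G d)) (wsign G d) else 0)
    - (\<Sum>d\<in>labels G. if crossesRL G d c then Poly_Mapping.single (phi N (- ind G d)) (wsign G d) else 0)"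
    for N
    unfolding sum_subtractf[symmetric]
    by (rule sum.cong) (auto simp: crossing_eq single_uminus dest: not_crossesLR_and_RL)
  then show ?thesis
    by (simp add: gfun_def sum.inter_filter Let_def)
qed

lemma FK_eq_sum: "FK G X = (\<Sum>c\<in>labels G. if lclass (gfun G c) = X then wsign G c else 0)
    - (if lclass 0 = X then writhe G else 0)"
  by (simp add: FK_def sum.inter_filter)

lemma crossing_self [simp]: "crossing G c c = 0"
  by (simp add: crossing_def cross_sign_def in_arc_def)

lemma cross_sign_antisym:
  "distinct [a, b, p, q] \<Longrightarrow> cross_sign a b p q = - cross_sign p q a b"
  unfolding cross_sign_def in_arc_def by (auto split: if_splits)

lemma crossing_antisym:
  assumes "gauss_wf G" "c \<in> labels G" "d \<in> labels G"
  shows "crossing G d c = - crossing G c d"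
  using cross_sign_antisym[OF chord_endpoints_distinct[OF assms]]
  by (cases "c = d") (simp_all add: crossing_def)

definition same_order :: "nat \<Rightarrow> nat \<Rightarrow> nat \<Rightarrow> nat \<Rightarrow> bool" where
  "same_order u v u' v' \<longleftrightarrow> (u < v \<longleftrightarrow> u' < v') \<and> (v < u \<longleftrightarrow> v' < u')"

lemma same_order_sym: "same_order u v u' v' \<Longrightarrow> same_order v u v' u'"
  unfolding same_order_def by auto

lemma same_order_eq_iff: "same_order u v u' v' \<Longrightarrow> u = v \<longleftrightarrow> u' = v'"
  unfolding same_order_def by (metis linorder_neqE_nat less_irrefl)

lemma in_arc_same_order:
  "same_order p q p' q' \<Longrightarrow> same_order p a p' a' \<Longrightarrow> same_order a q a' q' \<Longrightarrow>
    in_arc p a q \<longleftrightarrow> in_arc p' a' q'"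
  unfolding same_order_def in_arc_def by auto

lemma cross_sign_cong:
  assumes "in_arc p a q \<longleftrightarrow> in_arc p' a' q'" "in_arc p b q \<longleftrightarrow> in_arc p' b' q'"
    and "a = p \<longleftrightarrow> a' = p'" "a = q \<longleftrightarrow> a' = q'" "b = p \<longleftrightarrow> b' = p'" "b = q \<longleftrightarrow> b' = q'"
  shows "cross_sign a b p q = cross_sign a' b' p' q'"
  using assms unfolding cross_sign_def by simp

lemma cross_sign_same_order:
  assumes "same_order p q p' q'" "same_order p a p' a'" "same_order a q a' q'"
    and "same_order p b p' b'" "same_order b q b' q'"
  shows "cross_sign a b p q = cross_sign a' b' p' q'"
  using assms
  by (intro cross_sign_cong in_arc_same_order)
     (auto dest: same_order_eq_iff same_order_eq_iff[OF same_order_sym])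

lemma cross_sign_strict_mono:
  "strict_mono f \<Longrightarrow> cross_sign (f a) (f b) (f p) (f q) = cross_sign a b p q"
  by (rule sym, rule cross_sign_same_order) (auto simp: same_order_def strict_mono_less)

lemma crossing_transfer_mono:
  assumes wf: "gauss_wf G" "gauss_wf G'"
    and s: "pos_embedding s G G'" and mono: "strict_mono s"
    and "c \<in> labels G" "d \<in> labels G"
  shows "crossing G' d c = crossing G d c"
  unfolding crossing_def chord_endpoints_transfer(1,2)[OF wf s assms(5)]
    chord_endpoints_transfer(1,2)[OF wf s assms(6)]
  by (rule cross_sign_strict_mono[OF mono])

definition rotate_pos :: "nat \<Rightarrow> nat \<Rightarrow> nat \<Rightarrow> nat" where
  "rotate_pos n k i = (if k \<le> i then i - k else i + n - k)"

lemma nth_rotate_rotate_pos: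
  fixes G :: "'a list" and n :: nat
  assumes i: "i < length G"
  defines "k \<equiv> n mod length G"
  shows "rotate_pos (length G) k i < length (rotate n G)"
    and "rotate n G ! rotate_pos (length G) k i = G ! i"
proof -
  have k: "k < length G"
    unfolding k_def using i by (intro mod_less_divisor) linarith
  have lt: "rotate_pos (length G) k i < length G"
    using i k by (auto simp: rotate_pos_def)
  have "(n + rotate_pos (length G) k i) mod length G = (k + rotate_pos (length G) k i) mod length G"
    by (simp add: k_def mod_add_left_eq)
  also have "\<dots> = i"
    using i k by (cases "k \<le> i") (simp_all add: rotate_pos_def)
  finally show "rotate n G ! rotate_pos (length G) k i = G ! i"
    using nth_rotate[OF lt, of n] by simp
  show "rotate_pos (length G) k i < length (rotate n G)"
    using lt by simp
qed

lemma crossing_rotate: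
  assumes wf: "gauss_wf G" and c: "c \<in> labels G" and d: "d \<in> labels G"
  shows "crossing (rotate n G) d c = crossing G d c"
proof -
  define k where "k = n mod length G"
  define r where "r = rotate_pos (length G) k"
  have "G \<noteq> []"
    using c by auto
  then have k: "k < length G"
    by (simp add: k_def)
  have arc: "in_arc (r p) (r a) (r q) \<longleftrightarrow> in_arc p a q"
    if "p < length G" "a < length G" "q < length G" for p a q
    using that k unfolding r_def rotate_pos_def in_arc_def by (simp split: if_splits; arith)
  have inj: "r a = r p \<longleftrightarrow> a = p" if "p < length G" "a < length G" for p a
    using that k unfolding r_def rotate_pos_def by auto
  have emb: "pos_embedding r G (rotate n G)"
    using nth_rotate_rotate_pos[of _ G n] by (simp add: pos_embedding_def r_def k_def)
  have wf': "gauss_wf (rotate n G)"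
    using wf by simp
  note pos = chord_endpoints_transfer(1,2)[OF wf wf' emb]
  note ends = chord_endpoints(1,3)[OF wf c] chord_endpoints(1,3)[OF wf d]
  show ?thesis
    unfolding crossing_def pos[OF c] pos[OF d]
    by (rule cross_sign_cong) (simp_all only: arc inj ends)
qed

section \<open>Rotation, relabelling and the first two moves\<close>

lemma FK_cong:
  assumes "labels G' = labels G" "\<And>c. c \<in> labels G \<Longrightarrow> wsign G' c = wsign G c"
    and "\<And>c. c \<in> labels G \<Longrightarrow> gfun G' c = gfun G c"
  shows "FK G' = FK G"
proof
  fix X
  have "writhe G' = writhe G"
    unfolding writhe_def using assms by (auto intro: sum.cong)
  then show "FK G' X = FK G X"
    unfolding FK_eq_sum using assms by (auto intro!: sum.cong)
qed

lemma FK_eq_if_crossing_eq: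
  assumes L: "labels G' = labels G" and w: "\<And>c. c \<in> labels G \<Longrightarrow> wsign G' c = wsign G c"
    and k: "\<And>c d. c \<in> labels G \<Longrightarrow> d \<in> labels G \<Longrightarrow> crossing G' d c = crossing G d c"
  shows "FK G' = FK G"
proof (rule FK_cong[OF L w])
  have ind: "ind G' c = ind G c" if "c \<in> labels G" for c
    unfolding ind_eq_sum_crossing L using w k that by (auto intro!: sum.cong)
  show "gfun G' c = gfun G c" if "c \<in> labels G" for c
    unfolding gfun_eq_sum_crossing L using w k ind that by (auto intro!: sum.cong)
qed

lemma FK_rotate:
  assumes "gauss_wf G"
  shows "FK (rotate n G) = FK G"
proof (rule FK_eq_if_crossing_eq)
  have "pos_embedding (rotate_pos (length G) (n mod length G)) G (rotate n G)"
    using nth_rotate_rotate_pos[of _ G n] by (simp add: pos_embedding_def)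
  then show "wsign (rotate n G) c = wsign G c" if "c \<in> labels G" for c
    using chord_endpoints_transfer(3)[OF assms _ _ that] assms by simp
qed (simp_all add: crossing_rotate assms)

lemma chord_endpoints_relabel:
  assumes wf: "gauss_wf G" "gauss_wf G'" and G': "G' = map (\<lambda>(c, ov, e). (f c, ov, e)) G"
    and c: "c \<in> labels G"
  shows "tailpos G' (f c) = tailpos G c" "headpos G' (f c) = headpos G c"
    and "wsign G' (f c) = wsign G c"
proof -
  note p = chord_endpoints[OF wf(1) c]
  have "G' ! tailpos G c = (f c, True, wsign G c)" "G' ! headpos G c = (f c, False, wsign G c)"
    using p by (simp_all add: G')
  moreover have "tailpos G c < length G'" "headpos G c < length G'"
    using p by (simp_all add: G')
  ultimately show "tailpos G' (f c) = tailpos G c" and "headpos G' (f c) = headpos G c"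
    and "wsign G' (f c) = wsign G c"
    using tailpos_eqI[OF wf(2)] headpos_eqI[OF wf(2)] by (simp_all add: wsign_def)
qed

lemma FK_relabel:
  assumes wf: "gauss_wf G" "gauss_wf G'" and G': "G' = map (\<lambda>(c, ov, e). (f c, ov, e)) G"
    and inj: "inj_on f (labels G)"
  shows "FK G' = FK G"
proof
  fix X
  note pos = chord_endpoints_relabel[OF wf G']
  have L: "labels G' = f ` labels G"
    using G' by (force simp: labels_def case_prod_beta)
  have k: "crossing G' (f d) (f c) = crossing G d c" if "c \<in> labels G" "d \<in> labels G" for c d
    using pos[OF that(1)] pos[OF that(2)] by (simp add: crossing_def)
  have ind: "ind G' (f c) = ind G c" if "c \<in> labels G" for c
    unfolding ind_eq_sum_crossing L sum.reindex[OF inj] using k that pos by (auto intro!: sum.cong)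
  have g: "gfun G' (f c) = gfun G c" if "c \<in> labels G" for c
    unfolding gfun_eq_sum_crossing L sum.reindex[OF inj] using k that pos ind
    by (auto intro!: sum.cong)
  have "writhe G' = writhe G"
    unfolding writhe_def L sum.reindex[OF inj] using pos by (auto intro!: sum.cong)
  then show "FK G' X = FK G X"
    unfolding FK_eq_sum L sum.reindex[OF inj] using pos g by (auto intro!: sum.cong)
qed

text \<open>A chord whose index function vanishes contributes \<open>w(a) t\<^bsup>[0]\<^esup>\<close> to the sum,
  which cancels against its contribution to the writhe.\<close>

lemma FK_add_isolated_chord:
  assumes L: "labels G' = insert a (labels G)" and a: "a \<notin> labels G"
    and w: "\<And>c. c \<in> labels G \<Longrightarrow> wsign G' c = wsign G c"
    and k: "\<And>c d. c \<in> labels G \<Longrightarrow> d \<in> labels G \<Longrightarrow> crossing G' d c = crossing G d c"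
    and ka: "\<And>c. c \<in> labels G \<Longrightarrow> crossing G' a c = 0 \<and> crossing G' c a = 0"
  shows "FK G' = FK G"
proof
  fix X
  note sum_L = sum.insert[OF finite_labels a]
  have ind: "ind G' c = ind G c" if c: "c \<in> labels G" for c
    unfolding ind_eq_sum_crossing L using ka[OF c] w k c
    by (simp add: sum_L)
  have g: "gfun G' c = gfun G c" if c: "c \<in> labels G" for c
    unfolding gfun_eq_sum_crossing L using ka[OF c] w k c ind
    by (simp add: sum_L)
  have "gfun G' a = 0"
    unfolding gfun_eq_sum_crossing L using ka by (simp add: sum_L)
  then have "(\<Sum>c\<in>labels G'. if lclass (gfun G' c) = X then wsign G' c else 0) =
      (if lclass 0 = X then wsign G' a else 0)
    + (\<Sum>c\<in>labels G. if lclass (gfun G c) = X then wsign G c else 0)"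
    unfolding L using g w by (simp add: sum_L) (auto intro!: sum.cong)
  moreover have "writhe G' = writhe G + wsign G' a"
    unfolding writhe_def L using w by (simp add: sum_L)
  ultimately show "FK G' X = FK G X"
    unfolding FK_eq_sum by simp
qed

lemma phi_abs_eq_0_if_dvd: "m dvd k \<Longrightarrow> phi (nat \<bar>m\<bar>) k = 0"
  by (auto simp: phi_def)

text \<open>Two chords with the same crossings and opposite writhes have equal index functions,
  so their contributions cancel.\<close>

lemma FK_add_parallel_chords:
  assumes wf: "gauss_wf G'" and L: "labels G' = insert a (insert b (labels G))"
    and a: "a \<notin> labels G" and b: "b \<notin> labels G" and ab: "a \<noteq> b"
    and wab: "wsign G' b = - wsign G' a"
    and w: "\<And>c. c \<in> labels G \<Longrightarrow> wsign G' c = wsign G c"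
    and k: "\<And>c d. c \<in> labels G \<Longrightarrow> d \<in> labels G \<Longrightarrow> crossing G' d c = crossing G d c"
    and kab: "\<And>c. c \<in> labels G \<Longrightarrow> crossing G' a c = crossing G' b c \<and> crossing G' c a = crossing G' c b"
  shows "FK G' = FK G"
proof
  fix X
  have a': "a \<notin> insert b (labels G)"
    using a ab by simp
  note sum_L = sum.insert[OF _ a'] sum.insert[OF finite_labels b]
  have "b \<in> labels G'" "a \<in> labels G'"
    using L by auto
  then have kba: "crossing G' a b = - crossing G' b a"
    by (rule crossing_antisym[OF wf])
  have ind: "ind G' c = ind G c" if c: "c \<in> labels G" for c
    unfolding ind_eq_sum_crossing L using kab[OF c] wab w k c
    by (simp add: sum_L algebra_simps)
  have ind_ab: "ind G' a = ind G' b"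
    unfolding ind_eq_sum_crossing L using kab wab kba by (simp add: sum_L algebra_simps)
  have g: "gfun G' c = gfun G c" if c: "c \<in> labels G" for c
    unfolding gfun_eq_sum_crossing L using kab[OF c] wab ind_ab w k c ind
    by (simp add: sum_L single_uminus)
  have "gfun G' a = gfun G' b"
    unfolding gfun_eq_sum_crossing L using kab wab kba ind_ab ab
    by (simp add: sum_L algebra_simps phi_abs_eq_0_if_dvd)
  then have "(\<Sum>c\<in>labels G'. if lclass (gfun G' c) = X then wsign G' c else 0) =
      (\<Sum>c\<in>labels G. if lclass (gfun G c) = X then wsign G c else 0)"
    unfolding L using a g w wab by (simp add: sum_L) (auto intro!: sum.cong)
  moreover have "writhe G' = writhe G"
    unfolding writhe_def L using a w wab by (simp add: sum_L)
  ultimately show "FK G' X = FK G X"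
    unfolding FK_eq_sum by simp
qed

definition adjacent :: "nat \<Rightarrow> nat \<Rightarrow> bool" where
  "adjacent u v \<longleftrightarrow> v = Suc u \<or> u = Suc v"

lemma cross_sign_adjacent_endpoints:
  assumes "adjacent u v" "p \<notin> {u, v}" "q \<notin> {u, v}"
  shows "cross_sign u v p q = 0" "cross_sign p q u v = 0"
  using assms unfolding adjacent_def cross_sign_def in_arc_def by auto

lemma same_order_adjacent:
  assumes "adjacent u u'"
  shows "x \<notin> {u, u'} \<Longrightarrow> same_order x u x u'" "x \<notin> {u, u'} \<Longrightarrow> same_order u x u' x"
    and "adjacent v v' \<Longrightarrow> distinct [u, u', v, v'] \<Longrightarrow> same_order u v u' v'"
  using assms unfolding adjacent_def same_order_def by auto

lemma cross_sign_adjacent_shift: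
  assumes "adjacent u u'" "adjacent v v'" "distinct [u, u', v, v', p, q]"
  shows "cross_sign u v p q = cross_sign u' v' p q" "cross_sign p q u v = cross_sign p q u' v'"
  using assms
  by (auto intro!: cross_sign_same_order same_order_adjacent[OF assms(1)]
      same_order_adjacent[OF assms(2)] simp: same_order_def)

lemma crossing_adjacent_endpoints:
  assumes "gauss_wf G" "a \<in> labels G" "c \<in> labels G" "c \<noteq> a"
    and "adjacent (tailpos G a) (headpos G a)"
  shows "crossing G a c = 0" "crossing G c a = 0"
  using chord_endpoints_distinct[OF assms(1,2,3) assms(4)[symmetric]] assms(5)
  by (simp_all add: crossing_def cross_sign_adjacent_endpoints)

lemma crossing_parallel_chords:
  assumes wf: "gauss_wf G" and abc: "a \<in> labels G" "b \<in> labels G" "c \<in> labels G"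
    and ab: "a \<noteq> b" and c: "c \<notin> {a, b}"
    and adj: "adjacent (tailpos G a) (tailpos G b)" "adjacent (headpos G a) (headpos G b)"
  shows "crossing G a c = crossing G b c" "crossing G c a = crossing G c b"
proof -
  have "a \<noteq> c" "b \<noteq> c"
    using c by auto
  then have "distinct [tailpos G a, tailpos G b, headpos G a, headpos G b, tailpos G c, headpos G c]"
    using chord_endpoints_distinct[OF wf abc(1,2) ab] chord_endpoints_distinct[OF wf abc(1,3)]
      chord_endpoints_distinct[OF wf abc(2,3)] by auto
  then show "crossing G a c = crossing G b c" "crossing G c a = crossing G c b"
    unfolding crossing_def using cross_sign_adjacent_shift adj by blast+
qed

lemma pos_embedding_comp:
  "pos_embedding s G H \<Longrightarrow> pos_embedding t H K \<Longrightarrow> pos_embedding (t \<circ> s) G K"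
  by (simp add: pos_embedding_def)

definition skip :: "nat \<Rightarrow> nat \<Rightarrow> nat \<Rightarrow> nat" where
  "skip k n i = (if i < k then i else i + n)"

lemma strict_mono_skip: "strict_mono (skip k n)"
  by (auto simp: strict_mono_def skip_def)

lemma pos_embedding_skip: "pos_embedding (skip (length xs) (length A)) (xs @ ys) (xs @ A @ ys)"
  by (auto simp: pos_embedding_def skip_def nth_append)

lemma FK_omega1:
  assumes wf: "gauss_wf (xs @ ys)" "gauss_wf (xs @ [(a, ov, e), (a, \<not> ov, e)] @ ys)"
    and a: "a \<notin> labels (xs @ ys)"
  shows "FK (xs @ [(a, ov, e), (a, \<not> ov, e)] @ ys) = FK (xs @ ys)"
proof -
  define G' where "G' = xs @ [(a, ov, e), (a, \<not> ov, e)] @ ys"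
  have wf': "gauss_wf G'"
    using wf(2) by (simp add: G'_def)
  have emb: "pos_embedding (skip (length xs) 2) (xs @ ys) G'"
    using pos_embedding_skip[of xs "[(a, ov, e), (a, \<not> ov, e)]" ys] by (simp add: G'_def numeral_2_eq_2)
  have L: "labels G' = insert a (labels (xs @ ys))"
    by (auto simp: G'_def)
  have "tailpos G' a = length xs + of_bool (\<not> ov)"
    by (rule tailpos_eqI[OF wf', of _ _ e]) (cases ov; simp add: G'_def nth_append)+
  moreover have "headpos G' a = length xs + of_bool ov"
    by (rule headpos_eqI[OF wf', of _ _ e]) (cases ov; simp add: G'_def nth_append)+
  ultimately have adj: "adjacent (tailpos G' a) (headpos G' a)"
    by (simp add: adjacent_def)
  show ?thesis
    unfolding G'_def[symmetric]
  proof (rule FK_add_isolated_chord[OF L a])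
    show "wsign G' c = wsign (xs @ ys) c" if "c \<in> labels (xs @ ys)" for c
      by (rule chord_endpoints_transfer(3)[OF wf(1) wf' emb that])
    show "crossing G' d c = crossing (xs @ ys) d c"
      if "c \<in> labels (xs @ ys)" "d \<in> labels (xs @ ys)" for c d
      by (rule crossing_transfer_mono[OF wf(1) wf' emb strict_mono_skip that])
    show "crossing G' a c = 0 \<and> crossing G' c a = 0" if "c \<in> labels (xs @ ys)" for c
      using crossing_adjacent_endpoints[OF wf' _ _ _ adj] that a L by auto
  qed
qed

lemma omega2_endpoints:
  assumes wf: "gauss_wf (xs @ P @ ys @ Q @ zs)"
    and Q: "Q \<in> {[(a, False, e), (b, False, -e)], [(b, False, -e), (a, False, e)]}"
    and P: "P = [(a, True, e), (b, True, -e)]"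
  defines "G' \<equiv> xs @ P @ ys @ Q @ zs"
  shows "adjacent (tailpos G' a) (tailpos G' b)" "adjacent (headpos G' a) (headpos G' b)"
    and "wsign G' b = - wsign G' a"
proof -
  note wf' = wf[folded G'_def]
  have ta: "tailpos G' a = length xs"
    by (rule tailpos_eqI[OF wf', of _ _ e]) (simp_all add: G'_def P)
  have tb: "tailpos G' b = Suc (length xs)"
    by (rule tailpos_eqI[OF wf', of _ _ "-e"]) (simp_all add: G'_def P nth_append)
  then show "adjacent (tailpos G' a) (tailpos G' b)" "wsign G' b = - wsign G' a"
    using ta by (simp_all add: adjacent_def wsign_def G'_def P nth_append)
  define p where "p = length xs + 2 + length ys"
  have "Q = [(a, False, e), (b, False, -e)] \<or> Q = [(b, False, -e), (a, False, e)]"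
    using Q by simp
  then have "headpos G' a = p \<and> headpos G' b = Suc p \<or> headpos G' a = Suc p \<and> headpos G' b = p"
  proof
    assume Q: "Q = [(a, False, e), (b, False, -e)]"
    have "headpos G' a = p"
      by (rule headpos_eqI[OF wf', of _ _ e]) (simp_all add: G'_def P Q p_def nth_append)
    moreover have "headpos G' b = Suc p"
      by (rule headpos_eqI[OF wf', of _ _ "-e"]) (simp_all add: G'_def P Q p_def nth_append)
    ultimately show ?thesis
      by simp
  next
    assume Q: "Q = [(b, False, -e), (a, False, e)]"
    have "headpos G' a = Suc p"
      by (rule headpos_eqI[OF wf', of _ _ e]) (simp_all add: G'_def P Q p_def nth_append)
    moreover have "headpos G' b = p"
      by (rule headpos_eqI[OF wf', of _ _ "-e"]) (simp_all add: G'_def P Q p_def nth_append)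
    ultimately show ?thesis
      by simp
  qed
  then show "adjacent (headpos G' a) (headpos G' b)"
    by (auto simp: adjacent_def)
qed

lemma FK_omega2:
  assumes wf: "gauss_wf (xs @ ys @ zs)" "gauss_wf (xs @ P @ ys @ Q @ zs)"
    and a: "a \<notin> labels (xs @ ys @ zs)" and b: "b \<notin> labels (xs @ ys @ zs)" and ab: "a \<noteq> b"
    and Q: "Q \<in> {[(a, False, e), (b, False, -e)], [(b, False, -e), (a, False, e)]}"
    and P: "P = [(a, True, e), (b, True, -e)]"
  shows "FK (xs @ P @ ys @ Q @ zs) = FK (xs @ ys @ zs)"
proof -
  define G where "G = xs @ ys @ zs"
  define G' where "G' = xs @ P @ ys @ Q @ zs"
  define s where "s = skip (length (xs @ P @ ys)) 2 \<circ> skip (length xs) 2"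
  note wf' = wf(2)[folded G'_def] and ends = omega2_endpoints[OF wf(2) Q P, folded G'_def]
  have "pos_embedding (skip (length xs) 2) G (xs @ P @ ys @ zs)"
    using pos_embedding_skip[of xs P "ys @ zs"] P by (simp add: G_def numeral_2_eq_2)
  moreover have "pos_embedding (skip (length (xs @ P @ ys)) 2) ((xs @ P @ ys) @ zs) G'"
    using pos_embedding_skip[of "xs @ P @ ys" Q zs] Q by (auto simp: G'_def numeral_2_eq_2)
  ultimately have emb: "pos_embedding s G G'"
    unfolding s_def by (auto intro: pos_embedding_comp)
  have mono: "strict_mono s"
    using strict_mono_skip by (simp add: strict_mono_def s_def)
  have L: "labels G' = insert a (insert b (labels G))"
    using P Q by (auto simp: G_def G'_def)
  show ?thesis
    unfolding G_def[symmetric] G'_def[symmetric]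
  proof (rule FK_add_parallel_chords[OF wf' L a[folded G_def] b[folded G_def] ab ends(3)])
    show "wsign G' c = wsign G c" if "c \<in> labels G" for c
      using chord_endpoints_transfer(3)[OF wf(1)[folded G_def] wf' emb that] .
    show "crossing G' d c = crossing G d c" if "c \<in> labels G" "d \<in> labels G" for c d
      using crossing_transfer_mono[OF wf(1)[folded G_def] wf' emb mono that] .
    show "crossing G' a c = crossing G' b c \<and> crossing G' c a = crossing G' c b"
      if "c \<in> labels G" for c
      using crossing_parallel_chords[OF wf' _ _ _ ab _ ends(1,2)] that a b L by (auto simp: G_def)
  qed
qed

lemma FK_omega2':
  assumes wf: "gauss_wf (xs @ ys @ zs)" "gauss_wf (xs @ Q @ ys @ P @ zs)"
    and a: "a \<notin> labels (xs @ ys @ zs)" and b: "b \<notin> labels (xs @ ys @ zs)" and ab: "a \<noteq> b"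
    and Q: "Q \<in> {[(a, False, e), (b, False, -e)], [(b, False, -e), (a, False, e)]}"
    and P: "P = [(a, True, e), (b, True, -e)]"
  shows "FK (xs @ Q @ ys @ P @ zs) = FK (xs @ ys @ zs)"
proof -
  have rot': "rotate (length (xs @ Q @ ys)) (xs @ Q @ ys @ P @ zs) = [] @ P @ (zs @ xs) @ Q @ ys"
    using rotate_append[of "xs @ Q @ ys" "P @ zs"] by simp
  have rot: "rotate (length (xs @ ys)) (xs @ ys @ zs) = [] @ (zs @ xs) @ ys"
    using rotate_append[of "xs @ ys" zs] by simp
  have "FK (xs @ Q @ ys @ P @ zs) = FK ([] @ P @ (zs @ xs) @ Q @ ys)"
    unfolding rot'[symmetric] by (rule FK_rotate[OF wf(2), symmetric])
  also have "\<dots> = FK ([] @ (zs @ xs) @ ys)"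
  proof (rule FK_omega2[OF _ _ _ _ ab Q P])
    show "gauss_wf ([] @ (zs @ xs) @ ys)"
      unfolding rot[symmetric] using wf(1) by simp
    show "gauss_wf ([] @ P @ (zs @ xs) @ Q @ ys)"
      unfolding rot'[symmetric] using wf(2) by simp
  qed (use a b in auto)
  also have "\<dots> = FK (xs @ ys @ zs)"
    unfolding rot[symmetric] by (rule FK_rotate[OF wf(1)])
  finally show ?thesis .
qed

section \<open>The third move\<close>

definition apart :: "nat \<Rightarrow> nat \<Rightarrow> bool" where
  "apart p q \<longleftrightarrow> Suc p < q \<or> Suc q < p"

lemma block_perm_less:
  assumes S: "pairwise apart S"
    and in_block: "\<And>q u. q \<in> S \<Longrightarrow> u \<in> {q, Suc q} \<Longrightarrow> s u \<in> {q, Suc q}"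
    and outside: "\<And>u. (\<And>q. q \<in> S \<Longrightarrow> u \<notin> {q, Suc q}) \<Longrightarrow> s u = u"
    and not_same: "\<And>q. q \<in> S \<Longrightarrow> u \<in> {q, Suc q} \<Longrightarrow> v \<in> {q, Suc q} \<Longrightarrow> False"
    and uv: "u < v"
  shows "s u < s v"
proof (cases "\<exists>q\<in>S. u \<in> {q, Suc q}")
  case True
  then obtain q where q: "q \<in> S" "u \<in> {q, Suc q}"
    by blast
  moreover have "v \<notin> {q, Suc q}"
    using not_same[OF q] by blast
  ultimately have "s u \<le> Suc q" "Suc q < v"
    using in_block[OF q] uv by auto
  moreover have "Suc q < s v"
  proof (cases "\<exists>p\<in>S. v \<in> {p, Suc p}")
    case True
    then obtain p where p: "p \<in> S" "v \<in> {p, Suc p}"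
      by blast
    with q \<open>Suc q < v\<close> S have "Suc q < p"
      unfolding pairwise_def apart_def by force
    then show ?thesis
      using in_block[OF p] by auto
  qed (use outside \<open>Suc q < v\<close> in auto)
  ultimately show ?thesis
    by linarith
next
  case False
  then have "s u = u"
    using outside by blast
  moreover have "u < s v"
  proof (cases "\<exists>p\<in>S. v \<in> {p, Suc p}")
    case True
    then obtain p where p: "p \<in> S" "v \<in> {p, Suc p}"
      by blast
    with False uv have "u < p"
      by auto
    then show ?thesis
      using in_block[OF p] by auto
  qed (use outside uv in auto)
  ultimately show ?thesis
    by simp
qed

lemma same_order_block_perm:
  assumes S: "pairwise apart S"
    and in_block: "\<And>q u. q \<in> S \<Longrightarrow> u \<in> {q, Suc q} \<Longrightarrow> s u \<in> {q, Suc q}"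
    and outside: "\<And>u. (\<And>q. q \<in> S \<Longrightarrow> u \<notin> {q, Suc q}) \<Longrightarrow> s u = u"
    and not_same: "\<And>q. q \<in> S \<Longrightarrow> u \<in> {q, Suc q} \<Longrightarrow> v \<in> {q, Suc q} \<Longrightarrow> u = v"
  shows "same_order u v (s u) (s v)"
proof (cases "u = v")
  case False
  then have "s u < s v" if "u < v"
    using block_perm_less[OF S in_block outside _ that] not_same by blast
  moreover have "s v < s u" if "v < u"
    using block_perm_less[OF S in_block outside _ that] not_same False by blast
  ultimately show ?thesis
    unfolding same_order_def using False by (meson less_asym linorder_neqE_nat)
qed (simp add: same_order_def)

lemma pairwise_apart3:
  "apart qT qM \<Longrightarrow> apart qT qB \<Longrightarrow> apart qM qB \<Longrightarrow> pairwise apart {qT, qM, qB}"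
  unfolding pairwise_def apart_def by auto

lemma apart_block_unique:
  "pairwise apart S \<Longrightarrow> p \<in> S \<Longrightarrow> q \<in> S \<Longrightarrow> u \<in> {p, Suc p} \<Longrightarrow> u \<in> {q, Suc q} \<Longrightarrow> p = q"
  unfolding pairwise_def apart_def by fastforce

text \<open>The three chords of a third Reidemeister move are numbered \<open>x = 0\<close>, \<open>y = 1\<close>,
  \<open>z = 2\<close>. When the pairs of endpoints on the top, middle and bottom strand (see
  \<^const>\<open>r3_pairs\<close>) occupy the positions \<open>qT, Suc qT\<close>, \<open>qM, Suc qM\<close> and \<open>qB, Suc qB\<close>, the
  chord \<open>j\<close> runs from \<open>tri_tail \<dots> j\<close> to \<open>tri_head \<dots> j\<close>.\<close>

definition tri_tail :: "nat \<Rightarrow> nat \<Rightarrow> nat \<Rightarrow> bool \<Rightarrow> bool \<Rightarrow> bool \<Rightarrow> nat \<Rightarrow> nat" where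
  "tri_tail qT qM qB oT oM oB j =
     (if j = 0 then qT + of_bool (\<not> oT) else if j = 1 then qT + of_bool oT else qM + of_bool oM)"

definition tri_head :: "nat \<Rightarrow> nat \<Rightarrow> nat \<Rightarrow> bool \<Rightarrow> bool \<Rightarrow> bool \<Rightarrow> nat \<Rightarrow> nat" where
  "tri_head qT qM qB oT oM oB j =
     (if j = 0 then qM + of_bool (\<not> oM) else if j = 1 then qB + of_bool (\<not> oB) else qB + of_bool oB)"

definition tri_cross :: "nat \<Rightarrow> nat \<Rightarrow> nat \<Rightarrow> bool \<Rightarrow> bool \<Rightarrow> bool \<Rightarrow> nat \<Rightarrow> nat \<Rightarrow> int" where
  "tri_cross qT qM qB oT oM oB d c =
     cross_sign (tri_tail qT qM qB oT oM oB d) (tri_head qT qM qB oT oM oB d)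
       (tri_tail qT qM qB oT oM oB c) (tri_head qT qM qB oT oM oB c)"

lemma tri_endpoints_in_blocks:
  "tri_tail qT qM qB oT oM oB 0 \<in> {qT, Suc qT}" "tri_head qT qM qB oT oM oB 0 \<in> {qM, Suc qM}"
  "tri_tail qT qM qB oT oM oB 1 \<in> {qT, Suc qT}" "tri_head qT qM qB oT oM oB 1 \<in> {qB, Suc qB}"
  "tri_tail qT qM qB oT oM oB 2 \<in> {qM, Suc qM}" "tri_head qT qM qB oT oM oB 2 \<in> {qB, Suc qB}"
  by (simp_all add: tri_tail_def tri_head_def)

lemma tri_block_endpoints:
  "i \<in> {qT, Suc qT} \<Longrightarrow> i = tri_tail qT qM qB oT oM oB 0 \<or> i = tri_tail qT qM qB oT oM oB 1"
  "i \<in> {qM, Suc qM} \<Longrightarrow> i = tri_tail qT qM qB oT oM oB 2 \<or> i = tri_head qT qM qB oT oM oB 0"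
  "i \<in> {qB, Suc qB} \<Longrightarrow> i = tri_head qT qM qB oT oM oB 1 \<or> i = tri_head qT qM qB oT oM oB 2"
  by (cases oT; cases oM; cases oB; auto simp: tri_tail_def tri_head_def)+

lemma tri_endpoints_not_same_block:
  assumes apart: "apart qT qM" "apart qT qB" "apart qM qB" and "j < 3" "q \<in> {qT, qM, qB}"
    and "tri_tail qT qM qB oT oM oB j \<in> {q, Suc q}" "tri_head qT qM qB oT oM oB j \<in> {q, Suc q}"
  shows False
proof -
  note blocks = tri_endpoints_in_blocks[of qT qM qB oT oM oB]
  consider "j = 0" | "j = 1" | "j = 2"
    using \<open>j < 3\<close> by linarith
  then obtain p p' where "p \<in> {qT, qM, qB}" "p' \<in> {qT, qM, qB}" "p \<noteq> p'"
    and "tri_tail qT qM qB oT oM oB j \<in> {p, Suc p}" "tri_head qT qM qB oT oM oB j \<in> {p', Suc p'}"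
  proof cases
    case 1
    show ?thesis
      by (rule that[of qT qM]) (use 1 blocks(1,2) apart(1) in \<open>auto simp: apart_def\<close>)
  next
    case 2
    show ?thesis
      by (rule that[of qT qB]) (use 2 blocks(3,4) apart(2) in \<open>auto simp: apart_def\<close>)
  next
    case 3
    show ?thesis
      by (rule that[of qM qB]) (use 3 blocks(5,6) apart(3) in \<open>auto simp: apart_def\<close>)
  qed
  then show False
    using apart_block_unique[OF pairwise_apart3[OF apart]] assms(5-7) by metis
qed

lemma r3_pairs_tri_endpoints:
  assumes "r3_pairs x y z ex ey ez oT oM oB = (PT, PM, PB)"
    and "[G ! qT, G ! Suc qT] = PT" "[G ! qM, G ! Suc qM] = PM" "[G ! qB, G ! Suc qB] = PB"
    and "j < 3"
  shows "G ! tri_tail qT qM qB oT oM oB j = ([x, y, z] ! j, True, [ex, ey, ez] ! j)"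
    and "G ! tri_head qT qM qB oT oM oB j = ([x, y, z] ! j, False, [ex, ey, ez] ! j)"
proof -
  have blocks: "G ! (qT + of_bool v) = PT ! of_bool v" "G ! (qM + of_bool v) = PM ! of_bool v"
    "G ! (qB + of_bool v) = PB ! of_bool v" for v
    using assms(2-4)[symmetric] by (cases v; simp)+
  consider "j = 0" | "j = 1" | "j = 2"
    using \<open>j < 3\<close> by linarith
  then show "G ! tri_tail qT qM qB oT oM oB j = ([x, y, z] ! j, True, [ex, ey, ez] ! j)"
    and "G ! tri_head qT qM qB oT oM oB j = ([x, y, z] ! j, False, [ex, ey, ez] ! j)"
    using blocks assms(1)[unfolded r3_pairs_def, symmetric]
    by (cases; simp add: tri_tail_def tri_head_def split: if_splits)+
qed

lemma r3_ok_signs: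
  "r3_ok ex ey ez oT oM oB \<Longrightarrow> ex \<in> {1, -1} \<and> ey = ex * bsgn oM * bsgn oB \<and> ez = ex * bsgn oT * bsgn oB"
  unfolding r3_ok_def bsgn_def by auto

definition canonical_blocks :: "(nat \<times> nat \<times> nat) set" where
  "canonical_blocks = {(0, 2, 4), (0, 4, 2), (2, 0, 4), (2, 4, 0), (4, 0, 2), (4, 2, 0)}"

definition three_blocks :: "nat \<Rightarrow> nat \<Rightarrow> nat \<Rightarrow> nat \<Rightarrow> nat" where
  "three_blocks s1 s2 s3 i = (if i < 2 then s1 + i else if i < 4 then s2 + (i - 2) else s3 + (i - 4))"

lemma tri_cross_three_blocks:
  assumes "Suc s1 < s2" "Suc s2 < s3"
    and "\<And>b. b \<le> 1 \<Longrightarrow> three_blocks s1 s2 s3 (cT + b) = qT + b \<and>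
      three_blocks s1 s2 s3 (cM + b) = qM + b \<and> three_blocks s1 s2 s3 (cB + b) = qB + b"
  shows "tri_cross qT qM qB oT oM oB d c = tri_cross cT cM cB oT oM oB d c"
proof -
  have "strict_mono (three_blocks s1 s2 s3)"
    using assms(1,2) by (auto simp: strict_mono_def three_blocks_def)
  moreover have "of_bool v \<le> (1::nat)" for v
    by simp
  then have "tri_tail qT qM qB oT oM oB j = three_blocks s1 s2 s3 (tri_tail cT cM cB oT oM oB j)"
    "tri_head qT qM qB oT oM oB j = three_blocks s1 s2 s3 (tri_head cT cM cB oT oM oB j)" for j
    using assms(3) by (simp_all add: tri_tail_def tri_head_def)
  ultimately show ?thesis
    unfolding tri_cross_def by (simp add: cross_sign_strict_mono)
qed

lemma tri_cross_canonical:
  assumes "apart qT qM" "apart qT qB" "apart qM qB"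
  obtains cT cM cB where "(cT, cM, cB) \<in> canonical_blocks"
    and "\<And>oT oM oB d c. tri_cross qT qM qB oT oM oB d c = tri_cross cT cM cB oT oM oB d c"
proof -
  consider "Suc qT < qM" "Suc qM < qB" | "Suc qT < qB" "Suc qB < qM" | "Suc qM < qT" "Suc qT < qB"
    | "Suc qM < qB" "Suc qB < qT" | "Suc qB < qT" "Suc qT < qM" | "Suc qB < qM" "Suc qM < qT"
    using assms unfolding apart_def by linarith
  \<comment> \<open>\<open>r q\<close> is the canonical position of the block starting at \<open>q\<close>\<close>
  moreover define r :: "nat \<Rightarrow> nat"
    where "r q = 2 * (of_bool (qT < q) + of_bool (qM < q) + of_bool (qB < q))" for q
  ultimately show ?thesis
    by cases (rule that[of "r qT" "r qM" "r qB"];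
        use tri_cross_three_blocks in \<open>auto simp: r_def canonical_blocks_def three_blocks_def\<close>)+
qed

lemma phi_abs_cong:
  fixes A B :: int
  shows "phi (nat \<bar>A\<bar>) (A + B) = phi (nat \<bar>A\<bar>) B" "phi (nat \<bar>A\<bar>) (- A - B) = phi (nat \<bar>A\<bar>) (- B)"
    and "phi (nat \<bar>B\<bar>) (A + B) = phi (nat \<bar>B\<bar>) A" "phi (nat \<bar>B\<bar>) (- A - B) = phi (nat \<bar>B\<bar>) (- A)"
    and "phi (nat \<bar>A + B\<bar>) B = phi (nat \<bar>A + B\<bar>) (- A)"
    and "phi (nat \<bar>A + B\<bar>) (- B) = phi (nat \<bar>A + B\<bar>) A"
proof -
  have dvd: "m dvd (u - v) \<Longrightarrow> phi (nat \<bar>m\<bar>) u = phi (nat \<bar>m\<bar>) v" for m u v :: int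
    unfolding phi_def by (auto simp: mod_eq_dvd_iff)
  have "A + B dvd - B - A"
    by (metis dvd_minus_iff dvd_refl minus_diff_eq diff_minus_eq_add add.commute)
  then show "phi (nat \<bar>A + B\<bar>) (- B) = phi (nat \<bar>A + B\<bar>) A"
    by (rule dvd)
  show "phi (nat \<bar>A\<bar>) (A + B) = phi (nat \<bar>A\<bar>) B" "phi (nat \<bar>A\<bar>) (- A - B) = phi (nat \<bar>A\<bar>) (- B)"
    "phi (nat \<bar>B\<bar>) (A + B) = phi (nat \<bar>B\<bar>) A" "phi (nat \<bar>B\<bar>) (- A - B) = phi (nat \<bar>B\<bar>) (- A)"
    "phi (nat \<bar>A + B\<bar>) B = phi (nat \<bar>A + B\<bar>) (- A)"
    by (rule dvd; simp add: algebra_simps)+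
qed

lemmas tri_cross_simps = tri_cross_def tri_tail_def tri_head_def cross_sign_def in_arc_def

text \<open>The next two lemmas are finite checks: once the blocks are moved to canonical positions,
  all six orders of the blocks and all eight orientations are evaluated.\<close>

lemma tri_ind_sums:
  assumes "apart qT qM" "apart qT qB" "apart qM qB" and r3: "r3_ok ex ey ez oT oM oB"
  defines "K \<equiv> tri_cross qT qM qB oT oM oB" and "K' \<equiv> tri_cross qT qM qB (\<not> oT) (\<not> oM) (\<not> oB)"
  shows "c \<in> {0, 1, 2} \<Longrightarrow>
      ex * K 0 c + ey * K 1 c + ez * K 2 c = ex * K' 0 c + ey * K' 1 c + ez * K' 2 c"
    and "ex * K 0 1 + ey * K 1 1 + ez * K 2 1 =
      (ex * K 0 0 + ey * K 1 0 + ez * K 2 0) + (ex * K 0 2 + ey * K 1 2 + ez * K 2 2)"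
proof -
  obtain cT cM cB where canonical: "(cT, cM, cB) \<in> canonical_blocks"
    and K: "\<And>oT oM oB d c. tri_cross qT qM qB oT oM oB d c = tri_cross cT cM cB oT oM oB d c"
    using tri_cross_canonical[OF assms(1-3)] by blast
  show "c \<in> {0, 1, 2} \<Longrightarrow>
      ex * K 0 c + ey * K 1 c + ez * K 2 c = ex * K' 0 c + ey * K' 1 c + ez * K' 2 c"
    and "ex * K 0 1 + ey * K 1 1 + ez * K 2 1 =
      (ex * K 0 0 + ey * K 1 0 + ez * K 2 0) + (ex * K 0 2 + ey * K 1 2 + ez * K 2 2)"
    using canonical r3_ok_signs[OF r3] unfolding K_def K'_def K canonical_blocks_def
    by (elim insertE singletonE emptyE conjE; cases oT; cases oM; cases oB;
        simp add: tri_cross_simps bsgn_def)+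
qed

lemma tri_gfun_sums:
  fixes A B ex ey ez :: int
  assumes "apart qT qM" "apart qT qB" "apart qM qB" and r3: "r3_ok ex ey ez oT oM oB"
    and c: "c \<in> {0, 1, 2}"
  defines "K \<equiv> tri_cross qT qM qB oT oM oB" and "K' \<equiv> tri_cross qT qM qB (\<not> oT) (\<not> oM) (\<not> oB)"
    and "N \<equiv> nat \<bar>[A, A + B, B] ! c\<bar>"
  shows "Poly_Mapping.single (phi N (K 0 c * A)) (K 0 c * ex)
       + Poly_Mapping.single (phi N (K 1 c * (A + B))) (K 1 c * ey)
       + Poly_Mapping.single (phi N (K 2 c * B)) (K 2 c * ez)
     = Poly_Mapping.single (phi N (K' 0 c * A)) (K' 0 c * ex)
       + Poly_Mapping.single (phi N (K' 1 c * (A + B))) (K' 1 c * ey)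
       + Poly_Mapping.single (phi N (K' 2 c * B)) (K' 2 c * ez)"
proof -
  obtain cT cM cB where canonical: "(cT, cM, cB) \<in> canonical_blocks"
    and K: "\<And>oT oM oB d c. tri_cross qT qM qB oT oM oB d c = tri_cross cT cM cB oT oM oB d c"
    using tri_cross_canonical[OF assms(1-3)] by blast
  show ?thesis
    using canonical c r3_ok_signs[OF r3] unfolding K_def K'_def N_def K canonical_blocks_def
    by (elim insertE singletonE emptyE conjE; cases oT; cases oM; cases oB;
        simp add: tri_cross_simps bsgn_def phi_abs_cong single_uminus)+
qed

lemma cross_sign_eq_arc_diff:
  "i \<notin> {p, q} \<Longrightarrow> j \<notin> {p, q} \<Longrightarrow>
    cross_sign i j p q = of_bool (in_arc p j q) - of_bool (in_arc p i q)"
  unfolding cross_sign_def by auto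

lemma in_arc_shift_ends:
  "apart p q \<Longrightarrow> k \<notin> {p, Suc p, q, Suc q} \<Longrightarrow> i \<le> 1 \<Longrightarrow> j \<le> 1 \<Longrightarrow>
    in_arc (p + i) k (q + j) \<longleftrightarrow> in_arc p k q"
  unfolding in_arc_def apart_def by auto

lemma in_arc_triangle:
  "distinct [a, b, c] \<Longrightarrow> k \<notin> {a, b, c} \<Longrightarrow>
    (of_bool (in_arc a k b) + of_bool (in_arc b k c) - of_bool (in_arc a k c) :: int)
      = (if in_arc a b c then 0 else 1)"
  unfolding in_arc_def by auto

lemma tri_arc_relation:
  fixes oT oM oB :: bool
  assumes apart: "apart qT qM" "apart qT qB" "apart qM qB"
    and k: "k \<notin> {qT, Suc qT, qM, Suc qM, qB, Suc qB}"
  defines "t \<equiv> tri_tail qT qM qB oT oM oB" and "h \<equiv> tri_head qT qM qB oT oM oB"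
  shows "(of_bool (in_arc (t 0) k (h 0)) + of_bool (in_arc (t 2) k (h 2))
      - of_bool (in_arc (t 1) k (h 1)) :: int) = (if in_arc qT qM qB then 0 else 1)"
proof -
  have b: "of_bool v \<le> (1::nat)" for v
    by simp
  have "in_arc (t 0) k (h 0) = in_arc qT k qM" "in_arc (t 2) k (h 2) = in_arc qM k qB"
    "in_arc (t 1) k (h 1) = in_arc qT k qB"
    unfolding t_def h_def tri_tail_def tri_head_def
    using in_arc_shift_ends[OF apart(1) _ b b] in_arc_shift_ends[OF apart(3) _ b b]
      in_arc_shift_ends[OF apart(2) _ b b] k by simp_all
  moreover have "distinct [qT, qM, qB]"
    using apart by (auto simp: apart_def)
  ultimately show ?thesis
    using in_arc_triangle[of qT qM qB k] k by simp
qed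

lemma in_set3_nth:
  assumes "c \<in> {a, b, d}"
  obtains j where "j < 3" "c = [a, b, d] ! j"
proof -
  have "c \<in> set [a, b, d]"
    using assms by simp
  then obtain j where "j < length [a, b, d]" "c = [a, b, d] ! j"
    unfolding in_set_conv_nth by metis
  then show ?thesis
    using that[of j] by (simp add: numeral_3_eq_3)
qed

lemma sum_distinct3: "distinct [a, b, c] \<Longrightarrow> (\<Sum>d\<in>{a, b, c}. f d) = f a + f b + f c"
  by (simp add: add.assoc)

text \<open>A third move at the blocks starting at \<open>qT\<close>, \<open>qM\<close>, \<open>qB\<close>: these blocks of \<open>G\<close> hold the
  pairs \<open>PT\<close>, \<open>PM\<close>, \<open>PB\<close> of endpoints on the top, middle and bottom strand, and \<open>G'\<close> is \<open>G\<close>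
  with the two entries of each block exchanged, \<open>s\<close> being the corresponding map of positions.\<close>

locale r3_configuration =
  fixes G G' :: gauss and s :: "nat \<Rightarrow> nat" and qT qM qB x y z :: nat and ex ey ez :: int
    and oT oM oB :: bool and PT PM PB :: gauss
  assumes wf: "gauss_wf G" "gauss_wf G'"
    and apart: "apart qT qM" "apart qT qB" "apart qM qB"
    and embedding: "pos_embedding s G G'"
    and labels_eq: "labels G' = labels G"
    and swap_block: "\<And>q. q \<in> {qT, qM, qB} \<Longrightarrow> s q = Suc q \<and> s (Suc q) = q \<and> Suc q < length G"
    and swap_outside: "\<And>u. (\<And>q. q \<in> {qT, qM, qB} \<Longrightarrow> u \<notin> {q, Suc q}) \<Longrightarrow> s u = u"
    and pairs: "r3_pairs x y z ex ey ez oT oM oB = (PT, PM, PB)"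
    and blocks: "[G ! qT, G ! Suc qT] = PT" "[G ! qM, G ! Suc qM] = PM" "[G ! qB, G ! Suc qB] = PB"
    and distinct: "distinct [x, y, z]"
    and r3: "r3_ok ex ey ez oT oM oB"
begin

lemma triangle:
  "j < 3 \<Longrightarrow> G ! tri_tail qT qM qB oT oM oB j = ([x, y, z] ! j, True, [ex, ey, ez] ! j) \<and>
    G ! tri_head qT qM qB oT oM oB j = ([x, y, z] ! j, False, [ex, ey, ez] ! j)"
  using r3_pairs_tri_endpoints[OF pairs blocks] by simp

lemma blocks_less: "Suc qT < length G" "Suc qM < length G" "Suc qB < length G"
  using swap_block[of qT] swap_block[of qM] swap_block[of qB] by simp_all

lemma triangle_chord:
  assumes "j < 3"
  shows "[x, y, z] ! j \<in> labels G" "wsign G ([x, y, z] ! j) = [ex, ey, ez] ! j"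
    and "tailpos G ([x, y, z] ! j) = tri_tail qT qM qB oT oM oB j"
    and "headpos G ([x, y, z] ! j) = tri_head qT qM qB oT oM oB j"
proof -
  note tri = triangle[OF assms]
  consider "j = 0" | "j = 1" | "j = 2"
    using assms by linarith
  then have lt: "tri_tail qT qM qB oT oM oB j < length G" "tri_head qT qM qB oT oM oB j < length G"
    using tri_endpoints_in_blocks[of qT qM qB oT oM oB] blocks_less by (cases; auto)+
  show t: "tailpos G ([x, y, z] ! j) = tri_tail qT qM qB oT oM oB j"
    by (rule tailpos_eqI[OF wf(1) lt(1)]) (use tri in blast)
  show "headpos G ([x, y, z] ! j) = tri_head qT qM qB oT oM oB j"
    by (rule headpos_eqI[OF wf(1) lt(2)]) (use tri in blast)
  show "[x, y, z] ! j \<in> labels G"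
    unfolding labels_def using nth_mem[OF lt(1)] tri by (metis fst_conv image_eqI)
  show "wsign G ([x, y, z] ! j) = [ex, ey, ez] ! j"
    unfolding wsign_def t using tri by simp
qed

lemma swap_tri_endpoints:
  assumes "j < 3"
  shows "s (tri_tail qT qM qB oT oM oB j) = tri_tail qT qM qB (\<not> oT) (\<not> oM) (\<not> oB) j"
    and "s (tri_head qT qM qB oT oM oB j) = tri_head qT qM qB (\<not> oT) (\<not> oM) (\<not> oB) j"
  using assms swap_block
  by (cases oT; cases oM; cases oB; auto simp: tri_tail_def tri_head_def less_Suc_eq numeral_3_eq_3)+

lemma crossing_triangle:
  assumes "d < 3" "c < 3"
  shows "crossing G ([x, y, z] ! d) ([x, y, z] ! c) = tri_cross qT qM qB oT oM oB d c"
    and "crossing G' ([x, y, z] ! d) ([x, y, z] ! c) = tri_cross qT qM qB (\<not> oT) (\<not> oM) (\<not> oB) d c"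
  using chord_endpoints_transfer(1,2)[OF wf embedding triangle_chord(1)] triangle_chord(3,4)
    swap_tri_endpoints assms
  by (simp_all add: crossing_def tri_cross_def)

lemma outside_blocks:
  assumes c: "c \<in> labels G" "c \<notin> {x, y, z}" and q: "q \<in> {qT, qM, qB}"
  shows "tailpos G c \<notin> {q, Suc q}" "headpos G c \<notin> {q, Suc q}"
proof -
  have tri: "fst (G ! tri_tail qT qM qB oT oM oB j) \<in> {x, y, z}"
    "fst (G ! tri_head qT qM qB oT oM oB j) \<in> {x, y, z}" if "j \<in> {0, 1, 2}" for j
    using triangle[of j] that by auto
  have "fst (G ! i) \<in> {x, y, z}" if "i \<in> {q, Suc q}" for i
  proof -
    have "\<exists>j\<in>{0, 1, 2}. i = tri_tail qT qM qB oT oM oB j \<or> i = tri_head qT qM qB oT oM oB j"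
      using q that tri_block_endpoints[where i = i and qT = qT and qM = qM and qB = qB]
      by blast
    then show ?thesis
      using tri by blast
  qed
  then show "tailpos G c \<notin> {q, Suc q}" "headpos G c \<notin> {q, Suc q}"
    using chord_endpoints(2,4)[OF wf(1) c(1)] c(2) by force+
qed

lemma endpoints_not_same_block:
  assumes c: "c \<in> labels G" and q: "q \<in> {qT, qM, qB}"
    and "tailpos G c \<in> {q, Suc q}" "headpos G c \<in> {q, Suc q}"
  shows False
proof (cases "c \<in> {x, y, z}")
  case True
  then obtain j where "j < 3" "c = [x, y, z] ! j"
    by (rule in_set3_nth)
  with assms(3,4) have "tri_tail qT qM qB oT oM oB j \<in> {q, Suc q}"
    "tri_head qT qM qB oT oM oB j \<in> {q, Suc q}"
    by (simp_all add: triangle_chord)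
  then show False
    by (rule tri_endpoints_not_same_block[OF apart \<open>j < 3\<close> q])
next
  case False
  then show False
    using outside_blocks[OF c False q] assms(3) by blast
qed

lemma same_order_swap:
  assumes "\<And>q. q \<in> {qT, qM, qB} \<Longrightarrow> u \<in> {q, Suc q} \<Longrightarrow> v \<in> {q, Suc q} \<Longrightarrow> u = v"
  shows "same_order u v (s u) (s v)"
  using swap_block
  by (intro same_order_block_perm[OF pairwise_apart3[OF apart] _ swap_outside assms]) auto

lemma crossing_unchanged:
  assumes c: "c \<in> labels G" and d: "d \<in> labels G" and not_both: "c \<notin> {x, y, z} \<or> d \<notin> {x, y, z}"
  shows "crossing G' d c = crossing G d c"
proof -
  have cd: "same_order u v (s u) (s v)"
    if uv: "u \<in> {tailpos G c, headpos G c}" "v \<in> {tailpos G d, headpos G d}" for u v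
  proof (rule same_order_swap)
    fix q assume q: "q \<in> {qT, qM, qB}" "u \<in> {q, Suc q}" "v \<in> {q, Suc q}"
    from not_both have "u \<notin> {q, Suc q} \<or> v \<notin> {q, Suc q}"
    proof
      assume "c \<notin> {x, y, z}"
      then show ?thesis
        using outside_blocks[OF c _ q(1)] uv(1) by auto
    next
      assume "d \<notin> {x, y, z}"
      then show ?thesis
        using outside_blocks[OF d _ q(1)] uv(2) by auto
    qed
    with q show "u = v"
      by blast
  qed
  have dc: "same_order v u (s v) (s u)"
    if "u \<in> {tailpos G c, headpos G c}" "v \<in> {tailpos G d, headpos G d}" for u v
    using cd[OF that] by (rule same_order_sym)
  have cc: "same_order (tailpos G c) (headpos G c) (s (tailpos G c)) (s (headpos G c))"
    using endpoints_not_same_block[OF c] by (intro same_order_swap) blast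
  show ?thesis
    unfolding crossing_def chord_endpoints_transfer(1,2)[OF wf embedding c]
      chord_endpoints_transfer(1,2)[OF wf embedding d]
    by (rule sym, rule cross_sign_same_order) (simp_all add: cc cd dc)
qed

lemma crossing_outside_chord:
  assumes d: "d \<in> labels G" "d \<notin> {x, y, z}"
  shows "crossing G d y = crossing G d x + crossing G d z"
proof -
  have out: "k \<notin> {qT, Suc qT, qM, Suc qM, qB, Suc qB}" if "k \<in> {tailpos G d, headpos G d}" for k
    using outside_blocks[OF d, of qT] outside_blocks[OF d, of qM] outside_blocks[OF d, of qB] that
    by auto
  have arcs: "crossing G d ([x, y, z] ! j) =
      of_bool (in_arc (tri_tail qT qM qB oT oM oB j) (headpos G d) (tri_head qT qM qB oT oM oB j))
    - of_bool (in_arc (tri_tail qT qM qB oT oM oB j) (tailpos G d) (tri_head qT qM qB oT oM oB j))"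
    if j: "j < 3" for j
  proof -
    consider "j = 0" | "j = 1" | "j = 2"
      using j by linarith
    then have "{tri_tail qT qM qB oT oM oB j, tri_head qT qM qB oT oM oB j}
        \<subseteq> {qT, Suc qT, qM, Suc qM, qB, Suc qB}"
      using tri_endpoints_in_blocks[of qT qM qB oT oM oB] by cases auto
    then have "tailpos G d \<notin> {tri_tail qT qM qB oT oM oB j, tri_head qT qM qB oT oM oB j}"
      "headpos G d \<notin> {tri_tail qT qM qB oT oM oB j, tri_head qT qM qB oT oM oB j}"
      using out by blast+
    then show ?thesis
      unfolding crossing_def triangle_chord(3,4)[OF j] by (rule cross_sign_eq_arc_diff)
  qed
  \<comment> \<open>the arc counts of \<open>x\<close> and \<open>z\<close> minus that of \<open>y\<close> agree at the head and the tail of \<open>d\<close>\<close>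
  show ?thesis
    using arcs[of 0] arcs[of 1] arcs[of 2]
      tri_arc_relation[OF apart out[of "tailpos G d"], where oT = oT and oM = oM and oB = oB]
      tri_arc_relation[OF apart out[of "headpos G d"], where oT = oT and oM = oM and oB = oB]
    by simp
qed

lemma ind_triangle_part:
  assumes "c < 3"
  shows "(\<Sum>d\<in>{x, y, z}. wsign G d * crossing G' d ([x, y, z] ! c))
    = (\<Sum>d\<in>{x, y, z}. wsign G d * crossing G d ([x, y, z] ! c))"
proof -
  have "c \<in> {0, 1, 2}"
    using assms by auto
  then show ?thesis
    using tri_ind_sums(1)[OF apart r3] assms triangle_chord(2)[of 0] triangle_chord(2)[of 1]
      triangle_chord(2)[of 2] crossing_triangle[of 0 c] crossing_triangle[of 1 c] crossing_triangle[of 2 c]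
    by (simp add: sum_distinct3[OF distinct])
qed

lemma ind_triangle_relation:
  "(\<Sum>d\<in>{x, y, z}. wsign G d * crossing G d y)
    = (\<Sum>d\<in>{x, y, z}. wsign G d * crossing G d x) + (\<Sum>d\<in>{x, y, z}. wsign G d * crossing G d z)"
  using tri_ind_sums(2)[OF apart r3] triangle_chord(2)[of 0] triangle_chord(2)[of 1]
    triangle_chord(2)[of 2] crossing_triangle(1)[of 0 0] crossing_triangle(1)[of 1 0]
    crossing_triangle(1)[of 2 0] crossing_triangle(1)[of 0 1] crossing_triangle(1)[of 1 1]
    crossing_triangle(1)[of 2 1] crossing_triangle(1)[of 0 2] crossing_triangle(1)[of 1 2]
    crossing_triangle(1)[of 2 2]
  by (simp add: sum_distinct3[OF distinct])

lemma gfun_triangle_part: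
  assumes "c < 3" and I: "I y = I x + I z"
  shows "(\<Sum>d\<in>{x, y, z}. Poly_Mapping.single (phi (nat \<bar>I ([x, y, z] ! c)\<bar>)
        (crossing G' d ([x, y, z] ! c) * I d)) (crossing G' d ([x, y, z] ! c) * wsign G d))
    = (\<Sum>d\<in>{x, y, z}. Poly_Mapping.single (phi (nat \<bar>I ([x, y, z] ! c)\<bar>)
        (crossing G d ([x, y, z] ! c) * I d)) (crossing G d ([x, y, z] ! c) * wsign G d))"
proof -
  have c: "c \<in> {0, 1, 2}"
    using assms by auto
  then have "I ([x, y, z] ! c) = [I x, I x + I z, I z] ! c"
    using I by auto
  then show ?thesis
    using tri_gfun_sums[OF apart r3 c, of "I x" "I z"] I assms triangle_chord(2)[of 0]
      triangle_chord(2)[of 1] triangle_chord(2)[of 2] crossing_triangle[of 0 c]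
      crossing_triangle[of 1 c] crossing_triangle[of 2 c]
    by (simp add: sum_distinct3[OF distinct])
qed

lemma triangle_subset: "{x, y, z} \<subseteq> labels G"
  using triangle_chord(1)[of 0] triangle_chord(1)[of 1] triangle_chord(1)[of 2] by simp

lemma ind_eq:
  assumes c: "c \<in> labels G"
  shows "ind G' c = ind G c"
proof -
  note split = sum.subset_diff[OF triangle_subset finite_labels]
  have outer: "(\<Sum>d\<in>labels G - {x, y, z}. wsign G d * crossing G' d c)
      = (\<Sum>d\<in>labels G - {x, y, z}. wsign G d * crossing G d c)"
    using crossing_unchanged[OF c] by (auto intro!: sum.cong)
  have inner: "(\<Sum>d\<in>{x, y, z}. wsign G d * crossing G' d c) = (\<Sum>d\<in>{x, y, z}. wsign G d * crossing G d c)"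
  proof (cases "c \<in> {x, y, z}")
    case True
    then obtain j where "j < 3" "c = [x, y, z] ! j"
      by (rule in_set3_nth)
    then show ?thesis
      using ind_triangle_part by simp
  next
    case False
    then show ?thesis
      using crossing_unchanged[OF c] triangle_subset by (auto intro!: sum.cong)
  qed
  have "ind G' c = (\<Sum>d\<in>labels G. wsign G d * crossing G' d c)"
    unfolding ind_eq_sum_crossing labels_eq
    using chord_endpoints_transfer(3)[OF wf embedding] by (auto intro!: sum.cong)
  also have "\<dots> = ind G c"
    unfolding ind_eq_sum_crossing split outer inner ..
  finally show ?thesis .
qed

lemma ind_y: "ind G y = ind G x + ind G z"
proof -
  note split = sum.subset_diff[OF triangle_subset finite_labels]
  have "(\<Sum>d\<in>labels G - {x, y, z}. wsign G d * crossing G d y)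
      = (\<Sum>d\<in>labels G - {x, y, z}. wsign G d * crossing G d x)
      + (\<Sum>d\<in>labels G - {x, y, z}. wsign G d * crossing G d z)"
    unfolding sum.distrib[symmetric] using crossing_outside_chord
    by (auto intro!: sum.cong simp: algebra_simps)
  then show ?thesis
    unfolding ind_eq_sum_crossing split using ind_triangle_relation by simp
qed

lemma gfun_eq:
  assumes c: "c \<in> labels G"
  shows "gfun G' c = gfun G c"
proof -
  note split = sum.subset_diff[OF triangle_subset finite_labels]
  define f where "f H d = Poly_Mapping.single (phi (nat \<bar>ind G c\<bar>) (crossing H d c * ind G d))
    (crossing H d c * wsign G d)" for H d
  have "gfun G c = (\<Sum>d\<in>labels G. f G d)"
    unfolding gfun_eq_sum_crossing f_def ..
  moreover have "gfun G' c = (\<Sum>d\<in>labels G. f G' d)"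
    unfolding gfun_eq_sum_crossing f_def labels_eq using c ind_eq chord_endpoints_transfer(3)[OF wf embedding]
    by (auto intro!: sum.cong)
  moreover have "(\<Sum>d\<in>labels G - {x, y, z}. f G' d) = (\<Sum>d\<in>labels G - {x, y, z}. f G d)"
    using crossing_unchanged[OF c] by (auto simp: f_def intro!: sum.cong)
  moreover have "(\<Sum>d\<in>{x, y, z}. f G' d) = (\<Sum>d\<in>{x, y, z}. f G d)"
  proof (cases "c \<in> {x, y, z}")
    case True
    then obtain j where "j < 3" "c = [x, y, z] ! j"
      by (rule in_set3_nth)
    then show ?thesis
      unfolding f_def using gfun_triangle_part[OF _ ind_y] by simp
  next
    case False
    then show ?thesis
      using crossing_unchanged[OF c] triangle_subset by (auto simp: f_def intro!: sum.cong)
  qed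
  ultimately show ?thesis
    unfolding split by simp
qed

lemma FK_eq: "FK G' = FK G"
  by (rule FK_cong[OF labels_eq chord_endpoints_transfer(3)[OF wf embedding] gfun_eq])

end

definition swap_pair :: "nat \<Rightarrow> nat \<Rightarrow> nat" where
  "swap_pair k = id(k := Suc k, Suc k := k)"

lemma pos_embedding_swap_pair:
  "pos_embedding (swap_pair (length xs)) (xs @ [a, b] @ ys) (xs @ [b, a] @ ys)"
  by (auto simp: pos_embedding_def swap_pair_def nth_append)

lemma mset_eq_3_cases:
  assumes "mset [a, b, c] = mset [d, e, f]"
  shows "(a = d \<and> b = e \<and> c = f) \<or> (a = d \<and> b = f \<and> c = e) \<or> (a = e \<and> b = d \<and> c = f) \<or>
         (a = e \<and> b = f \<and> c = d) \<or> (a = f \<and> b = d \<and> c = e) \<or> (a = f \<and> b = e \<and> c = d)"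
  using assms by (auto simp: add_eq_conv_ex)

lemma swap_three_pairs:
  assumes G: "G = xs @ [a1, b1] @ ys @ [a2, b2] @ zs @ [a3, b3] @ ws"
    and G': "G' = xs @ [b1, a1] @ ys @ [b2, a2] @ zs @ [b3, a3] @ ws"
    and p: "p1 = length xs" "p2 = p1 + 2 + length ys" "p3 = p2 + 2 + length zs"
    and s: "s = swap_pair p1 \<circ> swap_pair p2 \<circ> swap_pair p3"
  shows "pos_embedding s G G'"
    and "q \<in> {p1, p2, p3} \<Longrightarrow> s q = Suc q \<and> s (Suc q) = q \<and> Suc q < length G"
    and "(\<And>q. q \<in> {p1, p2, p3} \<Longrightarrow> u \<notin> {q, Suc q}) \<Longrightarrow> s u = u"
    and "q \<in> {p1, p2, p3} \<Longrightarrow> q' \<in> {p1, p2, p3} \<Longrightarrow> q \<noteq> q' \<Longrightarrow> apart q q'"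
    and "[G ! p1, G ! Suc p1] = [a1, b1]" "[G ! p2, G ! Suc p2] = [a2, b2]"
      "[G ! p3, G ! Suc p3] = [a3, b3]"
proof -
  have "pos_embedding (swap_pair p3) G (xs @ [a1, b1] @ ys @ [a2, b2] @ zs @ [b3, a3] @ ws)"
    using pos_embedding_swap_pair[of "xs @ [a1, b1] @ ys @ [a2, b2] @ zs" a3 b3 ws] G p
    by (simp add: add.assoc)
  moreover have "pos_embedding (swap_pair p2) (xs @ [a1, b1] @ ys @ [a2, b2] @ zs @ [b3, a3] @ ws)
      (xs @ [a1, b1] @ ys @ [b2, a2] @ zs @ [b3, a3] @ ws)"
    using pos_embedding_swap_pair[of "xs @ [a1, b1] @ ys" a2 b2 "zs @ [b3, a3] @ ws"] p by simp
  moreover have "pos_embedding (swap_pair p1) (xs @ [a1, b1] @ ys @ [b2, a2] @ zs @ [b3, a3] @ ws) G'"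
    using pos_embedding_swap_pair[of xs a1 b1 "ys @ [b2, a2] @ zs @ [b3, a3] @ ws"] G' p by simp
  ultimately show "pos_embedding s G G'"
    unfolding s by (blast intro: pos_embedding_comp)
  show "q \<in> {p1, p2, p3} \<Longrightarrow> s q = Suc q \<and> s (Suc q) = q \<and> Suc q < length G"
    using p by (auto simp: s G swap_pair_def)
  show "(\<And>q. q \<in> {p1, p2, p3} \<Longrightarrow> u \<notin> {q, Suc q}) \<Longrightarrow> s u = u"
    by (simp add: s swap_pair_def)
  show "q \<in> {p1, p2, p3} \<Longrightarrow> q' \<in> {p1, p2, p3} \<Longrightarrow> q \<noteq> q' \<Longrightarrow> apart q q'"
    using p by (auto simp: apart_def)
  show "[G ! p1, G ! Suc p1] = [a1, b1]" "[G ! p2, G ! Suc p2] = [a2, b2]"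
    "[G ! p3, G ! Suc p3] = [a3, b3]"
    using G p by (simp_all add: nth_append)
qed

lemma FK_omega3:
  assumes wf: "gauss_wf (xs @ P1 @ ys @ P2 @ zs @ P3 @ ws)"
      "gauss_wf (xs @ rev P1 @ ys @ rev P2 @ zs @ rev P3 @ ws)"
    and distinct: "distinct [x, y, z]" and r3: "r3_ok ex ey ez oT oM oB"
    and pairs: "r3_pairs x y z ex ey ez oT oM oB = (PT, PM, PB)"
    and perm: "mset [P1, P2, P3] = mset [PT, PM, PB]"
  shows "FK (xs @ rev P1 @ ys @ rev P2 @ zs @ rev P3 @ ws) = FK (xs @ P1 @ ys @ P2 @ zs @ P3 @ ws)"
proof -
  have "length PT = 2" "length PM = 2" "length PB = 2"
    using pairs by (auto simp: r3_pairs_def)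
  then have "length P1 = 2 \<and> length P2 = 2 \<and> length P3 = 2"
    using mset_eq_3_cases[OF perm] by auto
  then obtain a1 b1 a2 b2 a3 b3 where P: "P1 = [a1, b1]" "P2 = [a2, b2]" "P3 = [a3, b3]"
    by (metis (no_types, lifting) One_nat_def Suc_1 length_0_conv length_Suc_conv)
  define G where "G = xs @ P1 @ ys @ P2 @ zs @ P3 @ ws"
  define G' where "G' = xs @ rev P1 @ ys @ rev P2 @ zs @ rev P3 @ ws"
  define p1 where "p1 = length xs"
  define p2 where "p2 = p1 + 2 + length ys"
  define p3 where "p3 = p2 + 2 + length zs"
  define s where "s = swap_pair p1 \<circ> swap_pair p2 \<circ> swap_pair p3"
  have "G' = xs @ [b1, a1] @ ys @ [b2, a2] @ zs @ [b3, a3] @ ws"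
    by (simp add: G'_def P)
  note swap = swap_three_pairs[OF G_def[unfolded P] this p1_def p2_def p3_def s_def, folded P]
  have core: "FK G' = FK G"
    if S: "{qT, qM, qB} = {p1, p2, p3}" "distinct [qT, qM, qB]"
      and "[G ! qT, G ! Suc qT] = PT" "[G ! qM, G ! Suc qM] = PM" "[G ! qB, G ! Suc qB] = PB"
    for qT qM qB
  proof -
    interpret r3_configuration G G' s qT qM qB x y z ex ey ez oT oM oB PT PM PB
    proof
      show "gauss_wf G" "gauss_wf G'"
        using wf by (simp_all add: G_def G'_def)
      show "apart qT qM" "apart qT qB" "apart qM qB"
        using S by (auto intro: swap(4))
      show "labels G' = labels G"
        by (auto simp: G_def G'_def labels_def)
    qed (use swap(1-3) S that distinct r3 pairs in auto)
    show ?thesis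
      by (rule FK_eq)
  qed
  have "distinct [p1, p2, p3]"
    by (simp add: p2_def p3_def)
  with mset_eq_3_cases[OF perm] have "FK G' = FK G"
    using core[of p1 p2 p3] core[of p1 p3 p2] core[of p2 p1 p3] core[of p2 p3 p1]
      core[of p3 p1 p2] core[of p3 p2 p1] swap(5-7)
    by (elim disjE conjE) (simp_all add: insert_commute)
  then show ?thesis
    by (simp add: G_def G'_def)
qed

lemma FK_gauss_move:
  assumes "gauss_move G G'" "gauss_wf G" "gauss_wf G'"
  shows "FK G' = FK G"
  using assms
proof (induction rule: gauss_move.induct)
  case (rotate G n)
  then show ?case by (simp add: FK_rotate)
next
  case (relabel f G)
  then show ?case by (intro FK_relabel[OF relabel.prems(1,2) refl relabel.hyps])
next
  case (omega1 c xs ys e ov)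
  then show ?case by (intro FK_omega1) simp_all
next
  case (omega2 a xs ys zs b e Q P)
  then show ?case by (intro FK_omega2) simp_all
next
  case (omega2' a xs ys zs b e Q P)
  then show ?case by (intro FK_omega2') simp_all
next
  case (omega3 xs P1 ys P2 zs P3 ws x y z ex ey ez oT oM oB PT PM PB)
  then show ?case by (intro FK_omega3) simp_all
qed

theorem theorem3p1:
  fixes K K' :: gauss
  assumes "gauss_wf K" and "gauss_equiv K K'"
  shows "FK K = FK K'"
proof -
  have "(symclp (\<lambda>G G'. gauss_wf G \<and> gauss_wf G' \<and> gauss_move G G'))\<^sup>*\<^sup>* K K'"
    using assms(2) by (simp add: gauss_equiv_def)
  then show ?thesis
  proof (induction rule: rtranclp_induct)
    case (step G G')
    from step.hyps(2) have "FK G' = FK G"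
      by (cases rule: symclpE) (auto dest: FK_gauss_move)
    then show ?case
      using step.IH by simp
  qed simp
qed

end
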